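(* There is an absolute constant $c>0$ such that for every $m$ there is an instance with two additive buyers and $m$ identical items (each buyer has the same value for all items) such that, for every selling order, there is a tie-breaking rule and a pure subgame perfect equilibrium of the resulting sequential first-price auction whose social welfare is at most $\mathrm{OPT}/(cm)$, where $\mathrm{OPT}$ is the maximum possible social welfare. In other words, the price of anarchy for additive buyers is $\Omega(m)$, even for identical items and for any selling order.
   Context: Setting (sequential first-price auctions): there is a set $M$ of $m$ items and a set $N$ of buyers. A buyer $i$ is additive if there are $v_{i,j}\ge 0$ with $v_i(S)=\sum_{j\in S}v_{i,j}$; utilities are quasi-linear. Items are sold one at a time; each item is sold by a sealed-bid first-price auction without reserve price: every buyer submits a nonnegative bid, a highest bidder wins (ties broken by a tie-breaking rule fixed by the seller) and pays his bid. The seller fixes the selling order (possibly as a function of the allocation of previously sold items) and the tie-breaking rule. There is full information. A pure subgame perfect equilibrium is a profile of pure strategies (a bid for each buyer at each node of the game tree) that is a Nash equilibrium in every subgame. Social welfare is the sum of the buyers' values for their bundles; the price of anarchy is the ratio of the maximum social welfare to the worst social welfare of an equilibrium. *)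

theory Defs
  imports Complex_Main "HOL-Library.FuncSet"
begin

text \<open>Items are the natural numbers 0,...,m-1. Buyers form a (finite) type 'b. A node of the game tree is the
  list of bid profiles submitted in the previous rounds (chronological order).\<close>

type_synonym 'b profile = "'b \<Rightarrow> real"
type_synonym 'b hist = "'b profile list"
type_synonym 'b alloc = "nat \<Rightarrow> 'b option"

text \<open>A selling order: the next item to be sold as a function of the
  allocation of previously sold items. It must choose an unsold item.\<close>
definition valid_order :: "nat \<Rightarrow> ('b alloc \<Rightarrow> nat) \<Rightarrow> bool" where
  "valid_order m ord \<longleftrightarrow>
     (\<forall>A. dom A \<subseteq> {..<m} \<and> card (dom A) < m \<longrightarrow> ord A < m \<and> ord A \<notin> dom A)"

definition valid_tiebreak :: "('b hist \<Rightarrow> 'b profile \<Rightarrow> 'b) \<Rightarrow> bool" where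
  "valid_tiebreak tb \<longleftrightarrow> (\<forall>h b i. b i \<le> b (tb h b))"

text \<open>Allocation reached after a history (given in reverse order).\<close>
primrec allocR :: "('b alloc \<Rightarrow> nat) \<Rightarrow> ('b hist \<Rightarrow> 'b profile \<Rightarrow> 'b) \<Rightarrow> 'b hist \<Rightarrow> 'b alloc" where
  "allocR ord tb [] = Map.empty"
| "allocR ord tb (b # r) = (let A = allocR ord tb r in A(ord A \<mapsto> tb (rev r) b))"

definition alloc_of :: "('b alloc \<Rightarrow> nat) \<Rightarrow> ('b hist \<Rightarrow> 'b profile \<Rightarrow> 'b) \<Rightarrow> 'b hist \<Rightarrow> 'b alloc" where
  "alloc_of ord tb h = allocR ord tb (rev h)"

definition payment :: "('b hist \<Rightarrow> 'b profile \<Rightarrow> 'b) \<Rightarrow> 'b hist \<Rightarrow> 'b \<Rightarrow> real" where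
  "payment tb h i = (\<Sum>t<length h. if tb (take t h) (h ! t) = i then (h ! t) i else 0)"

definition bundle_value :: "nat \<Rightarrow> ('b \<Rightarrow> nat \<Rightarrow> real) \<Rightarrow> 'b alloc \<Rightarrow> 'b \<Rightarrow> real" where
  "bundle_value m v A i = (\<Sum>j<m. if A j = Some i then v i j else 0)"

definition utility :: "nat \<Rightarrow> ('b \<Rightarrow> nat \<Rightarrow> real) \<Rightarrow> ('b alloc \<Rightarrow> nat) \<Rightarrow>
    ('b hist \<Rightarrow> 'b profile \<Rightarrow> 'b) \<Rightarrow> 'b hist \<Rightarrow> 'b \<Rightarrow> real" where
  "utility m v ord tb h i = bundle_value m v (alloc_of ord tb h) i - payment tb h i"

definition welfare :: "nat \<Rightarrow> ('b \<Rightarrow> nat \<Rightarrow> real) \<Rightarrow> 'b alloc \<Rightarrow> real" where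
  "welfare m v A = (\<Sum>j<m. case A j of None \<Rightarrow> 0 | Some i \<Rightarrow> v i j)"

definition opt_welfare :: "nat \<Rightarrow> ('b \<Rightarrow> nat \<Rightarrow> real) \<Rightarrow> real" where
  "opt_welfare m v = Max ((\<lambda>f. \<Sum>j<m. v (f j) j) ` ({..<m} \<rightarrow>\<^sub>E UNIV))"

text \<open>Pure strategy profile: s i h is the bid of buyer i at node h.
  Playing n further rounds from node h.\<close>
primrec extend :: "('b \<Rightarrow> 'b hist \<Rightarrow> real) \<Rightarrow> nat \<Rightarrow> 'b hist \<Rightarrow> 'b hist" where
  "extend s 0 h = h"
| "extend s (Suc n) h = extend s n (h @ [(\<lambda>i. s i h)])"

definition outcome :: "nat \<Rightarrow> ('b \<Rightarrow> 'b hist \<Rightarrow> real) \<Rightarrow> 'b hist \<Rightarrow> 'b hist" where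
  "outcome m s h = extend s (m - length h) h"

definition is_SPE :: "nat \<Rightarrow> ('b \<Rightarrow> nat \<Rightarrow> real) \<Rightarrow> ('b alloc \<Rightarrow> nat) \<Rightarrow>
    ('b hist \<Rightarrow> 'b profile \<Rightarrow> 'b) \<Rightarrow> ('b \<Rightarrow> 'b hist \<Rightarrow> real) \<Rightarrow> bool" where
  "is_SPE m v ord tb s \<longleftrightarrow>
     (\<forall>i h. 0 \<le> s i h) \<and>
     (\<forall>h. length h \<le> m \<longrightarrow> (\<forall>b\<in>set h. \<forall>i. 0 \<le> b i) \<longrightarrow>
        (\<forall>i s'. (\<forall>h'. 0 \<le> s' h') \<longrightarrow>
           utility m v ord tb (outcome m (s(i := s')) h) i
             \<le> utility m v ord tb (outcome m s h) i))"

datatype buyer = Buyer1 | Buyer2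

lemma UNIV_buyer: "(UNIV :: buyer set) = {Buyer1, Buyer2}"
  using buyer.exhaust by auto

instance buyer :: finite
  by standard (simp add: UNIV_buyer)

end

theory Submission
  imports Defs
begin

text \<open>Buyer 1 values every item at 1, buyer 2 values nothing. As long as buyer 1 has only
  bid 0, both buyers bid 0 and the tie goes to buyer 2, except in the last round, where buyer 1
  wins for free; once buyer 1 has bid anything positive, both bid 1 forever. On the path buyer 1
  earns 1, while any deviation earns him at most one item at a price below 1 before the threat
  starts and nothing afterwards; buyer 2 never gains by winning an item worthless to him. So the
  equilibrium welfare is 1 against an optimum of m, whatever the selling order.\<close>

lemma alloc_of_snoc:
  "alloc_of ord tb (h @ [b]) = (alloc_of ord tb h)(ord (alloc_of ord tb h) \<mapsto> tb h b)"
  by (simp add: alloc_of_def Let_def)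

lemma dom_alloc_of:
  assumes "valid_order m ord" and "length h \<le> m"
  shows "dom (alloc_of ord tb h) \<subseteq> {..<m} \<and> card (dom (alloc_of ord tb h)) = length h"
  using assms(2)
proof (induction h rule: rev_induct)
  case Nil
  show ?case by (simp add: alloc_of_def)
next
  case (snoc b h)
  let ?A = "alloc_of ord tb h"
  have A: "dom ?A \<subseteq> {..<m}" "card (dom ?A) = length h"
    using snoc by simp_all
  then have "ord ?A < m" "ord ?A \<notin> dom ?A"
    using assms(1) snoc.prems unfolding valid_order_def by auto
  moreover have "dom (alloc_of ord tb (h @ [b])) = insert (ord ?A) (dom ?A)"
    by (simp add: alloc_of_snoc)
  ultimately show ?case
    using A by (simp add: finite_subset[OF A(1)])
qed

lemma next_item_fresh:
  assumes "valid_order m ord" and "length h < m"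
  shows "ord (alloc_of ord tb h) < m" "alloc_of ord tb h (ord (alloc_of ord tb h)) = None"
  using assms dom_alloc_of[OF assms(1), of h tb] unfolding valid_order_def by (auto simp: domIff)

lemma bundle_value_fun_upd:
  assumes "k < m" and "A k = None"
  shows "bundle_value m v (A(k \<mapsto> w)) i = bundle_value m v A i + (if w = i then v i k else 0)"
proof -
  have "(if (A(k \<mapsto> w)) j = Some i then v i j else 0)
      = (if A j = Some i then v i j else 0) + (if j = k then (if w = i then v i k else 0) else 0)" for j
    using assms(2) by auto
  then show ?thesis
    using assms(1) by (simp add: bundle_value_def sum.distrib)
qed

lemma payment_snoc:
  "payment tb (h @ [b]) i = payment tb h i + (if tb h b = i then b i else 0)"
proof -
  have "(\<Sum>t<length h. if tb (take t (h @ [b])) ((h @ [b]) ! t) = i then ((h @ [b]) ! t) i else 0)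
      = payment tb h i"
    unfolding payment_def by (intro sum.cong) (auto simp: nth_append)
  then show ?thesis
    by (simp add: payment_def)
qed

lemma utility_snoc:
  assumes "valid_order m ord" and "length h < m"
  shows "utility m v ord tb (h @ [b]) i = utility m v ord tb h i
    + (if tb h b = i then v i (ord (alloc_of ord tb h)) - b i else 0)"
  using next_item_fresh[OF assms, of tb]
  by (simp add: utility_def alloc_of_snoc bundle_value_fun_upd payment_snoc)

lemma payment_eq_0:
  assumes "\<forall>b\<in>set h. b i = 0"
  shows "payment tb h i = 0"
  using assms unfolding payment_def by (auto intro!: sum.neutral)

lemma length_extend: "length (extend s n h) = length h + n"
  by (induction n arbitrary: h) auto

lemma extend_invariant:
  assumes "P h"
    and "\<And>h'. length h \<le> length h' \<Longrightarrow> length h' < length h + n \<Longrightarrow> P h' \<Longrightarrow> P (h' @ [\<lambda>i. s i h'])"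
  shows "P (extend s n h)"
  using assms
proof (induction n arbitrary: h)
  case (Suc n)
  have "P (extend s n (h @ [\<lambda>i. s i h]))"
    using Suc.prems by (intro Suc.IH) auto
  then show ?case
    by simp
qed simp

lemma extend_antimono:
  fixes f :: "'b hist \<Rightarrow> 'a::preorder"
  assumes "\<And>h'. length h \<le> length h' \<Longrightarrow> length h' < length h + n \<Longrightarrow> f (h' @ [\<lambda>i. s i h']) \<le> f h'"
  shows "f (extend s n h) \<le> f h"
  using extend_invariant[where P = "\<lambda>h'. f h' \<le> f h"] assms order_trans by blast

lemma opt_welfare_ge:
  fixes v :: "'b::finite \<Rightarrow> nat \<Rightarrow> real"
  assumes "f \<in> {..<m} \<rightarrow>\<^sub>E UNIV"
  shows "(\<Sum>j<m. v (f j) j) \<le> opt_welfare m v"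
  unfolding opt_welfare_def using assms by (intro Max_ge finite_imageI finite_PiE) auto

definition unit_valuation :: "buyer \<Rightarrow> nat \<Rightarrow> real" where
  "unit_valuation i j = (if i = Buyer1 then 1 else 0)"

definition quiet :: "buyer hist \<Rightarrow> bool" where
  "quiet h \<longleftrightarrow> (\<forall>b\<in>set h. b Buyer1 = 0)"

definition threat :: "buyer \<Rightarrow> buyer hist \<Rightarrow> real" where
  "threat i h = (if quiet h then 0 else 1)"

definition threat_tiebreak :: "nat \<Rightarrow> buyer hist \<Rightarrow> buyer profile \<Rightarrow> buyer" where
  "threat_tiebreak m h b =
     (if b Buyer1 < b Buyer2 then Buyer2
      else if b Buyer2 < b Buyer1 then Buyer1
      else if b Buyer1 = 0 \<and> Suc (length h) < m then Buyer2
      else Buyer1)"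

text \<open>Buyer 1's equilibrium continuation payoff: while quiet he still gets the last item for free.\<close>

definition potential :: "nat \<Rightarrow> (buyer alloc \<Rightarrow> nat) \<Rightarrow> buyer hist \<Rightarrow> real" where
  "potential m ord h = utility m unit_valuation ord (threat_tiebreak m) h Buyer1
     + (if quiet h \<and> length h < m then 1 else 0)"

lemma valid_tiebreak_threat_tiebreak: "valid_tiebreak (threat_tiebreak m)"
  unfolding valid_tiebreak_def
proof (intro allI)
  fix h b i
  show "b i \<le> b (threat_tiebreak m h b)"
    by (cases i) (auto simp: threat_tiebreak_def)
qed

lemma quiet_snoc [simp]: "quiet (h @ [b]) \<longleftrightarrow> quiet h \<and> b Buyer1 = 0"
  by (auto simp: quiet_def)

lemma utility_snoc_unit_valuation:
  assumes "valid_order m ord" and "length h < m"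
  shows "utility m unit_valuation ord tb (h @ [b]) i = utility m unit_valuation ord tb h i
    + (if tb h b = i then unit_valuation i 0 - b i else 0)"
  using utility_snoc[OF assms] by (simp add: unit_valuation_def)

lemma potential_snoc_le:
  assumes "valid_order m ord" and "length h < m"
    and "b Buyer2 = threat Buyer2 h" and "0 \<le> b Buyer1"
  shows "potential m ord (h @ [b]) \<le> potential m ord h"
  using assms utility_snoc_unit_valuation[OF assms(1,2)]
  by (auto simp: potential_def threat_def threat_tiebreak_def unit_valuation_def)

lemma potential_snoc_threat:
  assumes "valid_order m ord" and "length h < m"
  shows "potential m ord (h @ [\<lambda>i. threat i h]) = potential m ord h"
  using assms utility_snoc_unit_valuation[OF assms(1,2)]
  by (auto simp: potential_def threat_def threat_tiebreak_def unit_valuation_def)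

lemma utility_Buyer2_snoc_le:
  assumes "valid_order m ord" and "length h < m"
    and "b Buyer1 = threat Buyer1 h" and "0 \<le> b Buyer2"
  shows "utility m unit_valuation ord (threat_tiebreak m) (h @ [b]) Buyer2
    \<le> utility m unit_valuation ord (threat_tiebreak m) h Buyer2"
  using assms utility_snoc_unit_valuation[OF assms(1,2)]
  by (auto simp: unit_valuation_def)

lemma utility_Buyer2_snoc_threat:
  assumes "valid_order m ord" and "length h < m"
  shows "utility m unit_valuation ord (threat_tiebreak m) (h @ [\<lambda>i. threat i h]) Buyer2
    = utility m unit_valuation ord (threat_tiebreak m) h Buyer2"
  using assms utility_snoc_unit_valuation[OF assms(1,2)]
  by (auto simp: threat_def threat_tiebreak_def unit_valuation_def)

lemma potential_at_end:
  "length h = m \<Longrightarrow> potential m ord h = utility m unit_valuation ord (threat_tiebreak m) h Buyer1"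
  by (simp add: potential_def)

lemma threat_is_SPE:
  assumes ord: "valid_order m ord"
  shows "is_SPE m unit_valuation ord (threat_tiebreak m) threat"
  unfolding is_SPE_def
proof (intro conjI allI impI)
  fix i h
  show "0 \<le> threat i h"
    by (simp add: threat_def)
next
  fix h :: "buyer hist" and i and s' :: "buyer hist \<Rightarrow> real"
  assume len: "length h \<le> m" and s': "\<forall>h'. 0 \<le> s' h'"
  define n where "n = m - length h"
  let ?u = "utility m unit_valuation ord (threat_tiebreak m)"
  have outcome: "outcome m S h = extend S n h" "length (extend S n h) = m" for S
    using len by (simp_all add: outcome_def n_def length_extend)
  have rounds_left: "length h \<le> length h' \<Longrightarrow> length h' < length h + n \<Longrightarrow> length h' < m" for h'
    using len by (simp add: n_def)
  show "?u (outcome m (threat(i := s')) h) i \<le> ?u (outcome m threat h) i"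
  proof (cases i)
    case Buyer1
    have "potential m ord (extend (threat(Buyer1 := s')) n h) \<le> potential m ord h"
      using ord s' rounds_left
      by (intro extend_antimono[where f = "potential m ord"] potential_snoc_le) auto
    moreover have "potential m ord (extend threat n h) = potential m ord h"
      by (rule extend_invariant[where P = "\<lambda>h'. potential m ord h' = potential m ord h"])
        (simp_all add: potential_snoc_threat[OF ord] rounds_left)
    ultimately show ?thesis
      using Buyer1 outcome by (simp add: potential_at_end)
  next
    case Buyer2
    have "?u (extend (threat(Buyer2 := s')) n h) Buyer2 \<le> ?u h Buyer2"
      using ord s' rounds_left
      by (intro extend_antimono[where f = "\<lambda>h'. ?u h' Buyer2"] utility_Buyer2_snoc_le) auto
    moreover have "?u (extend threat n h) Buyer2 = ?u h Buyer2"
      by (rule extend_invariant[where P = "\<lambda>h'. ?u h' Buyer2 = ?u h Buyer2"])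
        (simp_all add: utility_Buyer2_snoc_threat[OF ord] rounds_left)
    ultimately show ?thesis
      using Buyer2 outcome by simp
  qed
qed

lemma welfare_unit_valuation: "welfare m unit_valuation A = bundle_value m unit_valuation A Buyer1"
  unfolding welfare_def bundle_value_def
  by (intro sum.cong) (auto simp: unit_valuation_def split: option.split)

lemma welfare_threat_outcome:
  assumes ord: "valid_order m ord" and "1 \<le> m"
  shows "welfare m unit_valuation (alloc_of ord (threat_tiebreak m) (outcome m threat [])) = 1"
proof -
  let ?h = "extend threat m []"
  have "quiet ?h"
    by (rule extend_invariant) (simp_all add: quiet_def threat_def)
  then have "payment (threat_tiebreak m) ?h Buyer1 = 0"
    by (intro payment_eq_0) (simp add: quiet_def)
  moreover have "potential m ord ?h = potential m ord []"
    by (rule extend_invariant[where P = "\<lambda>h'. potential m ord h' = potential m ord []"])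
      (simp_all add: potential_snoc_threat[OF ord])
  moreover have "potential m ord [] = 1"
    using \<open>1 \<le> m\<close>
    by (simp add: potential_def utility_def bundle_value_def payment_def alloc_of_def quiet_def)
  moreover have "potential m ord ?h = utility m unit_valuation ord (threat_tiebreak m) ?h Buyer1"
    by (simp add: potential_at_end length_extend)
  ultimately show ?thesis
    by (simp add: outcome_def welfare_unit_valuation utility_def)
qed

lemma opt_welfare_unit_valuation: "real m \<le> opt_welfare m unit_valuation"
proof -
  have "(\<Sum>j<m. unit_valuation ((\<lambda>j\<in>{..<m}. Buyer1) j) j) \<le> opt_welfare m unit_valuation"
    by (intro opt_welfare_ge) (simp add: PiE_iff extensional_def)
  then show ?thesis
    by (simp add: unit_valuation_def)
qed

theorem mainTheorem3:
  shows "\<exists>c::real. c > 0 \<and>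
    (\<forall>m::nat. m \<ge> 1 \<longrightarrow>
      (\<exists>v :: buyer \<Rightarrow> nat \<Rightarrow> real.
         (\<forall>i j. 0 \<le> v i j) \<and>
         (\<forall>i. \<forall>j<m. \<forall>j'<m. v i j = v i j') \<and>
         opt_welfare m v > 0 \<and>
         (\<forall>ord :: buyer alloc \<Rightarrow> nat. valid_order m ord \<longrightarrow>
            (\<exists>tb. valid_tiebreak tb \<and>
               (\<exists>s. is_SPE m v ord tb s \<and>
                  welfare m v (alloc_of ord tb (outcome m s [])) \<le> opt_welfare m v / (c * real m))))))"
proof (intro exI[of _ "1::real"] conjI allI impI exI[of _ unit_valuation])
  fix m :: nat and ord :: "buyer alloc \<Rightarrow> nat"
  assume m: "1 \<le> m" and ord: "valid_order m ord"
  have "1 \<le> opt_welfare m unit_valuation / (1 * real m)"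
    using opt_welfare_unit_valuation[of m] m by (simp add: field_simps)
  then show "\<exists>tb. valid_tiebreak tb \<and> (\<exists>s. is_SPE m unit_valuation ord tb s \<and>
      welfare m unit_valuation (alloc_of ord tb (outcome m s [])) \<le> opt_welfare m unit_valuation / (1 * real m))"
    using valid_tiebreak_threat_tiebreak threat_is_SPE[OF ord] welfare_threat_outcome[OF ord m]
    by (intro exI[of _ "threat_tiebreak m"] exI[of _ threat] conjI) simp_all
next
  fix m :: nat
  assume "1 \<le> m"
  then show "0 < opt_welfare m unit_valuation"
    using opt_welfare_unit_valuation[of m] by linarith
qed (simp_all add: unit_valuation_def)

end
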